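(* No duality of a thick building of type $\mathsf{F}_4$ is domestic.
   Context: A duality of an $\mathsf{F}_4$ building is an automorphism inducing the nontrivial automorphism of the $\mathsf{F}_4$ Coxeter graph. An automorphism is domestic if it maps no chamber to an opposite chamber (a chamber at maximal gallery distance). *)

theory Defs
  imports "HOL-Analysis.Analysis"
begin

text \<open>Simple roots of F4 (Bourbaki labelling 1-2=>3-4):
  a1 = e2 - e3, a2 = e3 - e4, a3 = e4, a4 = (e1 - e2 - e3 - e4)/2.
  Coxeter diagram: m(1,2)=3, m(2,3)=4, m(3,4)=3, other pairs commute.\<close>

definition F4_root :: "nat \<Rightarrow> real^4" where
  "F4_root i =
     (if i = 1 then vector [0, 1, -1, 0]
      else if i = 2 then vector [0, 0, 1, -1]
      else if i = 3 then vector [0, 0, 0, 1]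
      else vector [1/2, -1/2, -1/2, -1/2])"

definition refl :: "real^4 \<Rightarrow> real^4 \<Rightarrow> real^4" where
  "refl a v = v - (2 * (v \<bullet> a) / (a \<bullet> a)) *\<^sub>R a"

definition F4_gen :: "nat \<Rightarrow> (real^4 \<Rightarrow> real^4)" where
  "F4_gen i = refl (F4_root i)"

definition F4_word :: "nat list \<Rightarrow> (real^4 \<Rightarrow> real^4)" where
  "F4_word ws = foldr (\<circ>) (map F4_gen ws) id"

definition F4_W :: "(real^4 \<Rightarrow> real^4) set" where
  "F4_W = {F4_word ws | ws. set ws \<subseteq> {1..4}}"

definition F4_len :: "(real^4 \<Rightarrow> real^4) \<Rightarrow> nat" where
  "F4_len w = (LEAST n. \<exists>ws. set ws \<subseteq> {1..4} \<and> length ws = n \<and> F4_word ws = w)"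

section \<open>Buildings of type F4 (W-metric approach, Abramenko--Brown Def. 5.1)\<close>

definition F4_building :: "'c set \<Rightarrow> ('c \<Rightarrow> 'c \<Rightarrow> (real^4 \<Rightarrow> real^4)) \<Rightarrow> bool" where
  "F4_building Ch \<delta> \<longleftrightarrow>
     Ch \<noteq> {} \<and>
     (\<forall>x\<in>Ch. \<forall>y\<in>Ch. \<delta> x y \<in> F4_W) \<and>
     (\<forall>x\<in>Ch. \<forall>y\<in>Ch. \<delta> x y = id \<longleftrightarrow> x = y) \<and>
     (\<forall>C\<in>Ch. \<forall>D\<in>Ch. \<forall>C'\<in>Ch. \<forall>s\<in>{1..4}. \<delta> C' C = F4_gen s \<longrightarrow>
        (\<delta> C' D \<in> {F4_gen s \<circ> \<delta> C D, \<delta> C D} \<and>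
         (F4_len (F4_gen s \<circ> \<delta> C D) = F4_len (\<delta> C D) + 1 \<longrightarrow>
            \<delta> C' D = F4_gen s \<circ> \<delta> C D))) \<and>
     (\<forall>C\<in>Ch. \<forall>D\<in>Ch. \<forall>s\<in>{1..4}.
        \<exists>C'\<in>Ch. \<delta> C' C = F4_gen s \<and> \<delta> C' D = F4_gen s \<circ> \<delta> C D)"

text \<open>Thick: every panel contains at least three chambers.\<close>
definition thick :: "'c set \<Rightarrow> ('c \<Rightarrow> 'c \<Rightarrow> (real^4 \<Rightarrow> real^4)) \<Rightarrow> bool" where
  "thick Ch \<delta> \<longleftrightarrow>
     (\<forall>C\<in>Ch. \<forall>s\<in>{1..4}. \<exists>D1\<in>Ch. \<exists>D2\<in>Ch.
        D1 \<noteq> D2 \<and> \<delta> C D1 = F4_gen s \<and> \<delta> C D2 = F4_gen s)"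

definition adjacent :: "'c set \<Rightarrow> ('c \<Rightarrow> 'c \<Rightarrow> (real^4 \<Rightarrow> real^4)) \<Rightarrow> 'c \<Rightarrow> 'c \<Rightarrow> bool" where
  "adjacent Ch \<delta> x y \<longleftrightarrow> x \<in> Ch \<and> y \<in> Ch \<and> (\<exists>i\<in>{1..4}. \<delta> x y = F4_gen i)"

definition gallery :: "'c set \<Rightarrow> ('c \<Rightarrow> 'c \<Rightarrow> (real^4 \<Rightarrow> real^4)) \<Rightarrow> 'c list \<Rightarrow> bool" where
  "gallery Ch \<delta> g \<longleftrightarrow> g \<noteq> [] \<and> set g \<subseteq> Ch \<and>
     (\<forall>k. Suc k < length g \<longrightarrow> adjacent Ch \<delta> (g ! k) (g ! Suc k))"

definition gdist :: "'c set \<Rightarrow> ('c \<Rightarrow> 'c \<Rightarrow> (real^4 \<Rightarrow> real^4)) \<Rightarrow> 'c \<Rightarrow> 'c \<Rightarrow> nat" where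
  "gdist Ch \<delta> x y = (LEAST n. \<exists>g. gallery Ch \<delta> g \<and> hd g = x \<and> last g = y \<and> length g = Suc n)"

definition opposite :: "'c set \<Rightarrow> ('c \<Rightarrow> 'c \<Rightarrow> (real^4 \<Rightarrow> real^4)) \<Rightarrow> 'c \<Rightarrow> 'c \<Rightarrow> bool" where
  "opposite Ch \<delta> x y \<longleftrightarrow> x \<in> Ch \<and> y \<in> Ch \<and>
     (\<forall>u\<in>Ch. \<forall>v\<in>Ch. gdist Ch \<delta> u v \<le> gdist Ch \<delta> x y)"

text \<open>Duality: automorphism of the chamber system mapping i-adjacency to
  sigma(i)-adjacency, where sigma(i) = 5 - i is the nontrivial automorphism
  of the F4 Coxeter graph.\<close>
definition duality :: "'c set \<Rightarrow> ('c \<Rightarrow> 'c \<Rightarrow> (real^4 \<Rightarrow> real^4)) \<Rightarrow> ('c \<Rightarrow> 'c) \<Rightarrow> bool" where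
  "duality Ch \<delta> \<theta> \<longleftrightarrow> bij_betw \<theta> Ch Ch \<and>
     (\<forall>x\<in>Ch. \<forall>y\<in>Ch. \<forall>i\<in>{1..4}.
        \<delta> x y = F4_gen i \<longleftrightarrow> \<delta> (\<theta> x) (\<theta> y) = F4_gen (5 - i))"

definition domestic :: "'c set \<Rightarrow> ('c \<Rightarrow> 'c \<Rightarrow> (real^4 \<Rightarrow> real^4)) \<Rightarrow> ('c \<Rightarrow> 'c) \<Rightarrow> bool" where
  "domestic Ch \<delta> \<theta> \<longleftrightarrow> (\<forall>x\<in>Ch. \<not> opposite Ch \<delta> x (\<theta> x))"

end

theory Submission
  imports Defs
begin

text \<open>Choose a chamber \<open>C\<close> for which \<open>w = \<delta>(C, \<theta>C)\<close> has maximal length. We show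
  \<open>len(s w) < len(w)\<close> for every simple reflection \<open>s\<close>; then \<open>w\<close> is the longest element, so \<open>C\<close>
  and \<open>\<theta>C\<close> are opposite. Suppose \<open>len(s w) > len(w)\<close> and let \<open>t = 5 - s\<close> be the image of \<open>s\<close>
  under the graph automorphism. If \<open>len(w t) > len(w)\<close>, then, because \<open>\<alpha>\<^sub>s\<close> and \<open>\<alpha>\<^sub>t\<close> have
  different lengths, \<open>len(s w t) = len(w) + 2\<close>, and a chamber \<open>C'\<close> that is \<open>s\<close>-adjacent to \<open>C\<close>
  has \<open>\<delta>(C', \<theta>C') = s w t\<close>, contradicting maximality. If \<open>len(w t) < len(w)\<close>, maximality
  forces \<open>\<delta>(C, \<theta>D) = w t\<close> for every \<open>D\<close> that is \<open>s\<close>-adjacent to \<open>C\<close>; thickness provides two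
  such \<open>D\<close>, whose images are distinct \<open>t\<close>-adjacent chambers at Weyl distance \<open>w t\<close> from \<open>C\<close>,
  which is impossible as \<open>len(w t t) > len(w t)\<close>.

  Lengths in \<open>W(F4)\<close> are computed in the reflection representation as the number of
  positive roots sent to negative roots.\<close>

section \<open>The root system of type F4\<close>

definition v4 :: "real \<Rightarrow> real \<Rightarrow> real \<Rightarrow> real \<Rightarrow> real^4" where
  "v4 a b c d = vector [a, b, c, d]"

lemma v4_nth [simp]:
  "v4 a b c d $ 1 = a" "v4 a b c d $ 2 = b" "v4 a b c d $ 3 = c" "v4 a b c d $ 4 = d"
  unfolding v4_def vector_def by simp_all

lemma v4_components: "v = v4 (v$1) (v$2) (v$3) (v$4)"
  unfolding vec_eq_iff forall_4 by simp

lemma v4_eq_iff [simp]: "v4 a b c d = v4 a' b' c' d' \<longleftrightarrow> a = a' \<and> b = b' \<and> c = c' \<and> d = d'"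
  unfolding vec_eq_iff forall_4 by simp

lemma v4_add [simp]: "v4 a b c d + v4 a' b' c' d' = v4 (a+a') (b+b') (c+c') (d+d')"
  and v4_diff [simp]: "v4 a b c d - v4 a' b' c' d' = v4 (a-a') (b-b') (c-c') (d-d')"
  and v4_uminus [simp]: "- v4 a b c d = v4 (-a) (-b) (-c) (-d)"
  and v4_scaleR [simp]: "r *\<^sub>R v4 a b c d = v4 (r*a) (r*b) (r*c) (r*d)"
  and v4_zero: "0 = v4 0 0 0 0"
  unfolding vec_eq_iff forall_4 by simp_all

lemma v4_inner [simp]: "v4 a b c d \<bullet> v4 a' b' c' d' = a*a' + b*b' + c*c' + d*d'"
  unfolding inner_vec_def sum_4 by simp

text \<open>The index \<open>1\<close> also appears as \<open>Suc 0\<close> because some case splits produce that form.\<close>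
lemma F4_root_v4:
  "F4_root 1 = v4 0 1 (-1) 0" "F4_root (Suc 0) = v4 0 1 (-1) 0" "F4_root 2 = v4 0 0 1 (-1)"
  "F4_root 3 = v4 0 0 0 1" "F4_root 4 = v4 (1/2) (-1/2) (-1/2) (-1/2)"
  unfolding F4_root_def v4_def by simp_all

lemma F4_gen_v4:
  "F4_gen 1 (v4 a b c d) = v4 a c b d"
  "F4_gen (Suc 0) (v4 a b c d) = v4 a c b d"
  "F4_gen 2 (v4 a b c d) = v4 a b d c"
  "F4_gen 3 (v4 a b c d) = v4 a b c (-d)"
  "F4_gen 4 (v4 a b c d) = v4 (a - (a-b-c-d)/2) (b + (a-b-c-d)/2) (c + (a-b-c-d)/2) (d + (a-b-c-d)/2)"
  unfolding F4_gen_def refl_def F4_root_v4 by (simp_all add: field_simps)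

lemma F4_root_ne_zero: "F4_root s \<noteq> 0"
  unfolding F4_root_def v4_def[symmetric] v4_zero by auto

lemma F4_index_cases: "s \<in> {1..4} \<Longrightarrow> s = 1 \<or> s = 2 \<or> s = 3 \<or> s = (4::nat)"
  by auto

lemma F4_root_norm_dual: "s \<in> {1..4} \<Longrightarrow> F4_root (5 - s) \<bullet> F4_root (5 - s) \<noteq> F4_root s \<bullet> F4_root s"
  by (drule F4_index_cases) (auto simp: F4_root_v4)

definition F4_pos_list :: "(real^4) list" where
  "F4_pos_list =
    [v4 0 0 1 (-1), v4 0 0 0 1, v4 0 1 (-1) 0, v4 (1/2) (-1/2) (-1/2) (-1/2),
     v4 0 1 0 (-1), v4 0 0 1 0, v4 (1/2) (-1/2) (-1/2) (1/2), v4 (1/2) (-1/2) (1/2) (-1/2),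
     v4 0 0 1 1, v4 0 1 0 0, v4 (1/2) (-1/2) (1/2) (1/2), v4 0 1 0 1,
     v4 (1/2) (1/2) (-1/2) (-1/2), v4 0 1 1 0, v4 (1/2) (1/2) (-1/2) (1/2), v4 1 (-1) 0 0,
     v4 1 0 (-1) 0, v4 (1/2) (1/2) (1/2) (-1/2), v4 (1/2) (1/2) (1/2) (1/2), v4 1 0 0 (-1),
     v4 1 0 0 0, v4 1 0 0 1, v4 1 0 1 0, v4 1 1 0 0]"

definition F4_pos :: "(real^4) set" where "F4_pos = set F4_pos_list"
definition F4_neg :: "(real^4) set" where "F4_neg = uminus ` F4_pos"
definition F4_roots :: "(real^4) set" where "F4_roots = F4_pos \<union> F4_neg"

definition simple_coord1 :: "real^4 \<Rightarrow> real" where "simple_coord1 v = v$1 + v$2"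
definition simple_coord2 :: "real^4 \<Rightarrow> real" where "simple_coord2 v = 2 * v$1 + v$2 + v$3"
definition simple_coord3 :: "real^4 \<Rightarrow> real" where "simple_coord3 v = 3 * v$1 + v$2 + v$3 + v$4"
definition simple_coord4 :: "real^4 \<Rightarrow> real" where "simple_coord4 v = 2 * v$1"

lemmas simple_coord_defs = simple_coord1_def simple_coord2_def simple_coord3_def simple_coord4_def

lemma simple_coord_expansion:
  "v = simple_coord1 v *\<^sub>R F4_root 1 + simple_coord2 v *\<^sub>R F4_root 2
     + simple_coord3 v *\<^sub>R F4_root 3 + simple_coord4 v *\<^sub>R F4_root 4"
  by (subst (1) v4_components) (simp add: simple_coord_defs F4_root_v4 field_simps)

lemma simple_coord_linear:
  "simple_coord1 (a *\<^sub>R x + b *\<^sub>R y + c *\<^sub>R z + d *\<^sub>R u)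
     = a * simple_coord1 x + b * simple_coord1 y + c * simple_coord1 z + d * simple_coord1 u"
  "simple_coord2 (a *\<^sub>R x + b *\<^sub>R y + c *\<^sub>R z + d *\<^sub>R u)
     = a * simple_coord2 x + b * simple_coord2 y + c * simple_coord2 z + d * simple_coord2 u"
  "simple_coord3 (a *\<^sub>R x + b *\<^sub>R y + c *\<^sub>R z + d *\<^sub>R u)
     = a * simple_coord3 x + b * simple_coord3 y + c * simple_coord3 z + d * simple_coord3 u"
  "simple_coord4 (a *\<^sub>R x + b *\<^sub>R y + c *\<^sub>R z + d *\<^sub>R u)
     = a * simple_coord4 x + b * simple_coord4 y + c * simple_coord4 z + d * simple_coord4 u"
  unfolding simple_coord_defs by (simp_all add: algebra_simps)

lemma simple_coord_uminus:
  "simple_coord1 (-x) = - simple_coord1 x" "simple_coord2 (-x) = - simple_coord2 x"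
  "simple_coord3 (-x) = - simple_coord3 x" "simple_coord4 (-x) = - simple_coord4 x"
  unfolding simple_coord_defs by simp_all

lemma F4_pos_simple_coord_nonneg:
  "\<alpha> \<in> F4_pos \<Longrightarrow> simple_coord1 \<alpha> \<ge> 0 \<and> simple_coord2 \<alpha> \<ge> 0 \<and> simple_coord3 \<alpha> \<ge> 0 \<and> simple_coord4 \<alpha> \<ge> 0"
  unfolding F4_pos_def F4_pos_list_def simple_coord_defs by auto

lemma zero_notin_F4_pos: "0 \<notin> F4_pos"
  unfolding F4_pos_def F4_pos_list_def v4_zero by auto

lemma finite_F4_pos: "finite F4_pos"
  unfolding F4_pos_def by simp

lemma F4_root_in_pos: "s \<in> {1..4} \<Longrightarrow> F4_root s \<in> F4_pos"
  by (drule F4_index_cases) (auto simp: F4_pos_def F4_pos_list_def F4_root_v4)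

lemma F4_neg_iff: "\<alpha> \<in> F4_neg \<longleftrightarrow> - \<alpha> \<in> F4_pos"
  unfolding F4_neg_def by (metis image_iff minus_minus)

lemma F4_pos_disjoint_neg: "\<alpha> \<in> F4_pos \<Longrightarrow> \<alpha> \<notin> F4_neg"
proof
  assume pos: "\<alpha> \<in> F4_pos" and "\<alpha> \<in> F4_neg"
  then have "- \<alpha> \<in> F4_pos" by (simp add: F4_neg_iff)
  with pos have "simple_coord1 \<alpha> = 0" "simple_coord2 \<alpha> = 0" "simple_coord3 \<alpha> = 0" "simple_coord4 \<alpha> = 0"
    using F4_pos_simple_coord_nonneg[of \<alpha>] F4_pos_simple_coord_nonneg[of "- \<alpha>"]
    by (auto simp: simple_coord_uminus)
  then have "\<alpha> = 0" using simple_coord_expansion[of \<alpha>] by simp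
  with pos zero_notin_F4_pos show False by simp
qed

lemma F4_gen_pos_root:
  assumes "s \<in> {1..4}" "\<alpha> \<in> F4_pos" "\<alpha> \<noteq> F4_root s"
  shows "F4_gen s \<alpha> \<in> F4_pos"
proof -
  have "\<forall>\<alpha>\<in>F4_pos. \<alpha> \<noteq> F4_root s \<longrightarrow> F4_gen s \<alpha> \<in> F4_pos"
    using F4_index_cases[OF assms(1)] unfolding F4_pos_def F4_pos_list_def
    by (elim disjE) (simp_all add: F4_root_v4 F4_gen_v4 field_simps)
  with assms(2,3) show ?thesis by blast
qed

section \<open>The Weyl group acting on the roots\<close>

lemma linear_refl: "linear (refl a)"
  by (rule linearI) (simp_all add: refl_def inner_add_left algebra_simps add_divide_distrib scaleR_add_left)

lemma refl_self: "a \<noteq> 0 \<Longrightarrow> refl a a = - a"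
  by (simp add: refl_def algebra_simps scaleR_2)

lemma refl_refl: "a \<noteq> 0 \<Longrightarrow> refl a (refl a x) = x"
  by (simp add: refl_def inner_diff_left algebra_simps)

lemma refl_inner: "a \<noteq> 0 \<Longrightarrow> refl a x \<bullet> refl a y = x \<bullet> y"
  by (simp add: refl_def inner_diff_left inner_diff_right algebra_simps inner_commute)

lemma refl_conj:
  assumes "linear u" "\<And>x y. u x \<bullet> u y = x \<bullet> y"
  shows "u (refl a x) = refl (u a) (u x)"
  unfolding refl_def using assms by (simp add: linear_diff linear_scale)

lemma F4_gen_gen [simp]: "F4_gen s (F4_gen s x) = x"
  unfolding F4_gen_def by (rule refl_refl[OF F4_root_ne_zero])

lemma F4_gen_comp_gen: "F4_gen s \<circ> F4_gen s = id"
  by (rule ext) simp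

lemma comp_gen_gen: "w \<circ> F4_gen t \<circ> F4_gen t = w"
  by (simp add: fun_eq_iff)

lemma gen_comp_gen_comp: "F4_gen s \<circ> (F4_gen s \<circ> w) = w"
  by (simp add: fun_eq_iff)

lemma F4_gen_root: "F4_gen s (F4_root s) = - F4_root s"
  unfolding F4_gen_def by (rule refl_self[OF F4_root_ne_zero])

lemma F4_gen_ne_id: "F4_gen s \<noteq> id"
proof
  assume "F4_gen s = id"
  then have "- F4_root s = F4_root s" by (metis F4_gen_root id_apply)
  then have "F4_root s \<bullet> F4_root s = - (F4_root s \<bullet> F4_root s)" by (metis inner_minus_left)
  then show False using F4_root_ne_zero[of s] by simp
qed

lemma inv_F4_gen: "inv (F4_gen s) = F4_gen s"
  using inv_unique_comp[OF F4_gen_comp_gen F4_gen_comp_gen] by simp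

lemma bij_F4_gen: "bij (F4_gen s)"
  using o_bij[OF F4_gen_comp_gen F4_gen_comp_gen] .

lemma F4_gen_in_roots:
  assumes s: "s \<in> {1..4}" and \<alpha>: "\<alpha> \<in> F4_roots"
  shows "F4_gen s \<alpha> \<in> F4_roots"
proof -
  have neg: "F4_gen s (- \<beta>) = - F4_gen s \<beta>" for \<beta>
    using linear_neg[OF linear_refl] unfolding F4_gen_def by blast
  have "F4_gen s \<beta> \<in> F4_roots" "F4_gen s (- \<beta>) \<in> F4_roots" if "\<beta> \<in> F4_pos" for \<beta>
    using that F4_gen_pos_root[OF s that] F4_root_in_pos[OF s] F4_gen_root[of s]
    by (cases "\<beta> = F4_root s"; auto simp: neg F4_roots_def F4_neg_iff)+
  with \<alpha> show ?thesis unfolding F4_roots_def F4_neg_def by auto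
qed

lemma F4_word_Nil [simp]: "F4_word [] = id"
  unfolding F4_word_def by simp

lemma F4_word_Cons [simp]: "F4_word (s # ws) = F4_gen s \<circ> F4_word ws"
  unfolding F4_word_def by simp

lemma F4_word_append: "F4_word (xs @ ys) = F4_word xs \<circ> F4_word ys"
  by (induction xs) auto

lemma linear_F4_word: "linear (F4_word ws)"
proof (induction ws)
  case (Cons s ws)
  then show ?case unfolding F4_word_Cons F4_gen_def by (rule linear_compose[OF _ linear_refl])
qed (simp only: F4_word_Nil linear_id)

lemma F4_word_inner: "F4_word ws x \<bullet> F4_word ws y = x \<bullet> y"
  by (induction ws arbitrary: x y) (simp_all add: F4_gen_def refl_inner[OF F4_root_ne_zero])

lemma F4_word_in_roots: "set ws \<subseteq> {1..4} \<Longrightarrow> \<alpha> \<in> F4_roots \<Longrightarrow> F4_word ws \<alpha> \<in> F4_roots"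
  by (induction ws) (auto intro: F4_gen_in_roots)

lemma F4_word_rev_comp: "F4_word (rev ws) \<circ> F4_word ws = id"
proof (induction ws)
  case (Cons s ws)
  have "F4_word (rev (s # ws)) \<circ> F4_word (s # ws) = F4_word (rev ws) \<circ> (F4_gen s \<circ> F4_gen s) \<circ> F4_word ws"
    by (simp add: F4_word_append comp_assoc)
  then show ?case by (simp only: F4_gen_comp_gen comp_id Cons.IH)
qed simp

lemma F4_word_comp_rev: "F4_word ws \<circ> F4_word (rev ws) = id"
  using F4_word_rev_comp[of "rev ws"] by simp

lemma inv_F4_word: "inv (F4_word ws) = F4_word (rev ws)"
  using inv_unique_comp[OF F4_word_comp_rev F4_word_rev_comp] by simp

lemma in_F4_W_iff: "w \<in> F4_W \<longleftrightarrow> (\<exists>ws. set ws \<subseteq> {1..4} \<and> F4_word ws = w)"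
  unfolding F4_W_def by auto

lemma F4_word_in_W: "set ws \<subseteq> {1..4} \<Longrightarrow> F4_word ws \<in> F4_W"
  unfolding in_F4_W_iff by blast

lemma linear_F4_W: "w \<in> F4_W \<Longrightarrow> linear w"
  unfolding in_F4_W_iff using linear_F4_word by auto

lemma F4_W_inner: "w \<in> F4_W \<Longrightarrow> w x \<bullet> w y = x \<bullet> y"
  unfolding in_F4_W_iff using F4_word_inner by auto

lemma F4_W_uminus: "w \<in> F4_W \<Longrightarrow> w (- x) = - w x"
  using linear_F4_W linear_neg by blast

lemma bij_F4_W: "w \<in> F4_W \<Longrightarrow> bij w"
  unfolding in_F4_W_iff using o_bij[OF F4_word_rev_comp F4_word_comp_rev] by blast

lemma inv_in_F4_W: "w \<in> F4_W \<Longrightarrow> inv w \<in> F4_W"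
  unfolding in_F4_W_iff using inv_F4_word by (metis set_rev)

lemma comp_gen_in_F4_W: "w \<in> F4_W \<Longrightarrow> t \<in> {1..4} \<Longrightarrow> w \<circ> F4_gen t \<in> F4_W"
  unfolding in_F4_W_iff by (metis F4_word_Cons F4_word_Nil F4_word_append Un_subset_iff
    comp_id empty_subsetI insert_subset set_append set_simps)

lemma gen_comp_in_F4_W: "w \<in> F4_W \<Longrightarrow> s \<in> {1..4} \<Longrightarrow> F4_gen s \<circ> w \<in> F4_W"
  unfolding in_F4_W_iff by (metis F4_word_Cons insert_subset list.simps(15))

lemma F4_W_root_pos_or_neg:
  assumes "w \<in> F4_W" "t \<in> {1..4}"
  shows "w (F4_root t) \<in> F4_pos \<or> w (F4_root t) \<in> F4_neg"
  using assms F4_root_in_pos[OF assms(2)] F4_word_in_roots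
  unfolding in_F4_W_iff F4_roots_def by blast

lemma inv_gen_comp: "w \<in> F4_W \<Longrightarrow> inv (F4_gen s \<circ> w) = inv w \<circ> F4_gen s"
  using o_inv_distrib[OF bij_F4_gen bij_F4_W] inv_F4_gen by metis

section \<open>Length and inversions\<close>

lemma F4_len_le_length: "set ws \<subseteq> {1..4} \<Longrightarrow> F4_len (F4_word ws) \<le> length ws"
  unfolding F4_len_def by (rule Least_le) auto

lemma F4_reduced_word_exists:
  "w \<in> F4_W \<Longrightarrow> \<exists>ws. set ws \<subseteq> {1..4} \<and> length ws = F4_len w \<and> F4_word ws = w"
  unfolding F4_len_def in_F4_W_iff by (rule LeastI_ex) auto

lemma F4_len_id: "F4_len id = 0"
  using F4_len_le_length[of "[]"] by simp

lemma F4_word_deletion: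
  assumes "set ws \<subseteq> {1..4}" "t \<in> {1..4}" "F4_word ws (F4_root t) \<in> F4_neg"
  shows "\<exists>ws'. set ws' \<subseteq> {1..4} \<and> length ws' + 1 = length ws \<and> F4_word ws' = F4_word ws \<circ> F4_gen t"
  using assms
proof (induction ws)
  case Nil
  then show ?case using F4_root_in_pos F4_pos_disjoint_neg by auto
next
  case (Cons s ws)
  have s: "s \<in> {1..4}" and ws: "set ws \<subseteq> {1..4}" using Cons.prems by auto
  show ?case
  proof (cases "F4_word ws (F4_root t) \<in> F4_neg")
    case True
    from Cons.IH[OF ws Cons.prems(2) True] obtain ws' where
      "set ws' \<subseteq> {1..4}" "length ws' + 1 = length ws" "F4_word ws' = F4_word ws \<circ> F4_gen t" by blast
    with s show ?thesis by (intro exI[of _ "s # ws'"]) (auto simp: comp_assoc)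
  next
    case False
    then have "F4_word ws (F4_root t) \<in> F4_pos"
      using F4_word_in_roots[OF ws] F4_root_in_pos[OF Cons.prems(2)] unfolding F4_roots_def by blast
    moreover have "F4_gen s (F4_word ws (F4_root t)) \<in> F4_neg" using Cons.prems(3) by simp
    ultimately have root: "F4_word ws (F4_root t) = F4_root s"
      using F4_gen_pos_root[OF s] F4_pos_disjoint_neg by blast
    text \<open>A word carrying \<open>\<alpha>\<^sub>t\<close> to \<open>\<alpha>\<^sub>s\<close> conjugates \<open>s\<^sub>t\<close> into \<open>s\<^sub>s\<close>.\<close>
    have "F4_word ws (F4_gen t x) = F4_gen s (F4_word ws x)" for x
      using refl_conj[OF linear_F4_word F4_word_inner] root unfolding F4_gen_def by metis
    then have "F4_word ws = F4_word (s # ws) \<circ> F4_gen t" by (simp add: fun_eq_iff)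
    moreover have "length ws + 1 = length (s # ws)" by simp
    ultimately show ?thesis using ws by blast
  qed
qed

lemma F4_len_comp_gen_neg:
  assumes w: "w \<in> F4_W" and t: "t \<in> {1..4}" and neg: "w (F4_root t) \<in> F4_neg"
  shows "F4_len (w \<circ> F4_gen t) + 1 = F4_len w"
proof -
  obtain ws where ws: "set ws \<subseteq> {1..4}" "length ws = F4_len w" "F4_word ws = w"
    using F4_reduced_word_exists[OF w] by blast
  obtain ws' where ws': "set ws' \<subseteq> {1..4}" "length ws' + 1 = length ws" "F4_word ws' = w \<circ> F4_gen t"
    using F4_word_deletion[OF ws(1) t] neg ws(3) by blast
  have "F4_len (w \<circ> F4_gen t) + 1 \<le> F4_len w"
    using F4_len_le_length[OF ws'(1)] ws'(2,3) ws(2) by simp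
  moreover obtain us where us: "set us \<subseteq> {1..4}" "length us = F4_len (w \<circ> F4_gen t)"
    "F4_word us = w \<circ> F4_gen t"
    using F4_reduced_word_exists[OF comp_gen_in_F4_W[OF w t]] by blast
  then have "F4_len w \<le> length (us @ [t])"
    using F4_len_le_length[of "us @ [t]"] t by (simp add: F4_word_append comp_gen_gen)
  ultimately show ?thesis using us(2) by simp
qed

lemma F4_len_comp_gen_pos:
  assumes w: "w \<in> F4_W" and t: "t \<in> {1..4}" and pos: "w (F4_root t) \<in> F4_pos"
  shows "F4_len (w \<circ> F4_gen t) = F4_len w + 1"
proof -
  have "(w \<circ> F4_gen t) (F4_root t) \<in> F4_neg"
    using pos F4_W_uminus[OF w] by (simp add: F4_gen_root F4_neg_iff)
  from F4_len_comp_gen_neg[OF comp_gen_in_F4_W[OF w t] t this] show ?thesis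
    unfolding comp_gen_gen by linarith
qed

lemma F4_len_comp_gen_cases:
  assumes "w \<in> F4_W" "t \<in> {1..4}"
  shows "F4_len (w \<circ> F4_gen t) = F4_len w + 1 \<or> F4_len (w \<circ> F4_gen t) + 1 = F4_len w"
  using F4_W_root_pos_or_neg[OF assms] F4_len_comp_gen_neg[OF assms] F4_len_comp_gen_pos[OF assms]
  by blast

definition inversions :: "(real^4 \<Rightarrow> real^4) \<Rightarrow> (real^4) set" where
  "inversions w = {\<alpha> \<in> F4_pos. w \<alpha> \<in> F4_neg}"

lemma card_inversions_comp_gen:
  assumes w: "w \<in> F4_W" and t: "t \<in> {1..4}"
  shows "card (inversions (w \<circ> F4_gen t)) + (if w (F4_root t) \<in> F4_neg then 1 else 0)
       = card (inversions w) + (if w (F4_root t) \<in> F4_pos then 1 else 0)"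
proof -
  let ?g = "F4_gen t" and ?r = "F4_root t"
  let ?I = "{\<beta> \<in> F4_pos - {?r}. w \<beta> \<in> F4_neg}"
  have r: "?r \<in> F4_pos" by (rule F4_root_in_pos[OF t])
  have perm: "?g \<alpha> \<in> F4_pos - {?r}" if "\<alpha> \<in> F4_pos - {?r}" for \<alpha>
  proof -
    have "?g \<alpha> \<noteq> ?r"
    proof
      assume "?g \<alpha> = ?r"
      then have "\<alpha> = - ?r" using F4_gen_gen[of t \<alpha>] F4_gen_root[of t] by simp
      with that r show False using F4_pos_disjoint_neg F4_neg_iff by auto
    qed
    then show ?thesis using F4_gen_pos_root[OF t] that by auto
  qed
  have "{\<alpha> \<in> F4_pos - {?r}. w (?g \<alpha>) \<in> F4_neg} = ?g ` ?I"
  proof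
    show "{\<alpha> \<in> F4_pos - {?r}. w (?g \<alpha>) \<in> F4_neg} \<subseteq> ?g ` ?I"
    proof
      fix \<alpha> assume "\<alpha> \<in> {\<alpha> \<in> F4_pos - {?r}. w (?g \<alpha>) \<in> F4_neg}"
      then have "?g \<alpha> \<in> ?I" using perm by blast
      then show "\<alpha> \<in> ?g ` ?I" using image_eqI[of \<alpha> ?g "?g \<alpha>"] by simp
    qed
    show "?g ` ?I \<subseteq> {\<alpha> \<in> F4_pos - {?r}. w (?g \<alpha>) \<in> F4_neg}"
    proof
      fix \<alpha> assume "\<alpha> \<in> ?g ` ?I"
      then obtain \<beta> where "\<beta> \<in> ?I" "\<alpha> = ?g \<beta>" by blast
      then show "\<alpha> \<in> {\<alpha> \<in> F4_pos - {?r}. w (?g \<alpha>) \<in> F4_neg}" using perm by simp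
    qed
  qed
  moreover have "inj_on ?g ?I" by (rule inj_onI) (metis F4_gen_gen)
  ultimately have same: "card {\<alpha> \<in> F4_pos - {?r}. w (?g \<alpha>) \<in> F4_neg} = card ?I"
    by (simp add: card_image)
  have split: "card {\<alpha> \<in> F4_pos. P \<alpha>} = card {\<alpha> \<in> F4_pos - {?r}. P \<alpha>} + (if P ?r then 1 else 0)"
    for P
  proof -
    have "{\<alpha> \<in> F4_pos. P \<alpha>} = (if P ?r then insert ?r else id) {\<alpha> \<in> F4_pos - {?r}. P \<alpha>}"
      using r by auto
    then show ?thesis using finite_F4_pos by simp
  qed
  have "w (?g ?r) = - w ?r" using F4_W_uminus[OF w] by (simp add: F4_gen_root)
  then show ?thesis
    unfolding inversions_def split[of "\<lambda>\<alpha>. (w \<circ> ?g) \<alpha> \<in> F4_neg"] split[of "\<lambda>\<alpha>. w \<alpha> \<in> F4_neg"]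
    using same by (simp add: F4_neg_iff)
qed

lemma F4_len_eq_card_inversions: "w \<in> F4_W \<Longrightarrow> F4_len w = card (inversions w)"
proof -
  have "F4_len (F4_word ws) = card (inversions (F4_word ws))" if "set ws \<subseteq> {1..4}" for ws
    using that
  proof (induction ws rule: rev_induct)
    case Nil
    have "inversions id = {}" using F4_pos_disjoint_neg unfolding inversions_def by auto
    then show ?case unfolding F4_word_Nil F4_len_id by (simp only: card.empty)
  next
    case (snoc t ws)
    have ws: "set ws \<subseteq> {1..4}" and t: "t \<in> {1..4}" using snoc.prems by auto
    let ?w = "F4_word ws"
    have w: "?w \<in> F4_W" by (rule F4_word_in_W[OF ws])
    have card: "card (inversions (?w \<circ> F4_gen t)) + (if ?w (F4_root t) \<in> F4_neg then 1 else 0)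
       = card (inversions ?w) + (if ?w (F4_root t) \<in> F4_pos then 1 else 0)"
      by (rule card_inversions_comp_gen[OF w t])
    have "F4_len (?w \<circ> F4_gen t) = card (inversions (?w \<circ> F4_gen t))"
    proof (cases "?w (F4_root t) \<in> F4_pos")
      case True
      then have "?w (F4_root t) \<notin> F4_neg" using F4_pos_disjoint_neg by blast
      with True card show ?thesis
        using F4_len_comp_gen_pos[OF w t True] snoc.IH[OF ws] by simp
    next
      case False
      then have "?w (F4_root t) \<in> F4_neg" using F4_W_root_pos_or_neg[OF w t] by blast
      with False card show ?thesis
        using F4_len_comp_gen_neg[OF w t] snoc.IH[OF ws] by simp
    qed
    then show ?case unfolding F4_word_append F4_word_Cons F4_word_Nil comp_id .
  qed
  then show "w \<in> F4_W \<Longrightarrow> ?thesis" unfolding in_F4_W_iff by blast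
qed

lemma F4_len_le_card_pos: "w \<in> F4_W \<Longrightarrow> F4_len w \<le> card F4_pos"
  unfolding F4_len_eq_card_inversions inversions_def by (rule card_mono[OF finite_F4_pos]) auto

lemma F4_len_inv: "w \<in> F4_W \<Longrightarrow> F4_len (inv w) = F4_len w"
proof -
  have le: "F4_len (inv w) \<le> F4_len w" if w: "w \<in> F4_W" for w
  proof -
    obtain ws where "set ws \<subseteq> {1..4}" "length ws = F4_len w" "F4_word ws = w"
      using F4_reduced_word_exists[OF w] by blast
    then show ?thesis using F4_len_le_length[of "rev ws"] by (auto simp: inv_F4_word)
  qed
  assume w: "w \<in> F4_W"
  show ?thesis
    using le[OF w] le[OF inv_in_F4_W[OF w]] inv_inv_eq[OF bij_F4_W[OF w]] by simp
qed

lemma F4_len_gen_comp_eq_comp_gen_inv: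
  "w \<in> F4_W \<Longrightarrow> s \<in> {1..4} \<Longrightarrow> F4_len (F4_gen s \<circ> w) = F4_len (inv w \<circ> F4_gen s)"
  using F4_len_inv[OF gen_comp_in_F4_W] inv_gen_comp by metis

lemma F4_len_gen_comp_neg:
  assumes w: "w \<in> F4_W" and s: "s \<in> {1..4}" and "inv w (F4_root s) \<in> F4_neg"
  shows "F4_len (F4_gen s \<circ> w) + 1 = F4_len w"
  using F4_len_comp_gen_neg[OF inv_in_F4_W[OF w] s assms(3)] F4_len_inv[OF w]
    F4_len_gen_comp_eq_comp_gen_inv[OF w s] by simp

lemma F4_len_gen_comp_pos:
  assumes w: "w \<in> F4_W" and s: "s \<in> {1..4}" and "inv w (F4_root s) \<in> F4_pos"
  shows "F4_len (F4_gen s \<circ> w) = F4_len w + 1"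
  using F4_len_comp_gen_pos[OF inv_in_F4_W[OF w] s assms(3)] F4_len_inv[OF w]
    F4_len_gen_comp_eq_comp_gen_inv[OF w s] by simp

lemma F4_len_gen_comp_cases:
  assumes w: "w \<in> F4_W" and s: "s \<in> {1..4}"
  shows "F4_len (F4_gen s \<circ> w) = F4_len w + 1 \<or> F4_len (F4_gen s \<circ> w) + 1 = F4_len w"
  using F4_W_root_pos_or_neg[OF inv_in_F4_W[OF w] s]
    F4_len_gen_comp_neg[OF w s] F4_len_gen_comp_pos[OF w s] by blast

text \<open>Since \<open>w\<close> preserves lengths of roots, \<open>w \<alpha>\<^sub>t\<close> cannot be \<open>\<alpha>\<^sub>s\<close>, so it stays positive under \<open>s\<^sub>s\<close>.\<close>
lemma F4_len_gen_comp_comp_gen: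
  assumes w: "w \<in> F4_W" and s: "s \<in> {1..4}" and t: "t \<in> {1..4}"
    and norm: "F4_root t \<bullet> F4_root t \<noteq> F4_root s \<bullet> F4_root s"
    and left: "F4_len (F4_gen s \<circ> w) = F4_len w + 1"
    and right: "F4_len (w \<circ> F4_gen t) = F4_len w + 1"
  shows "F4_len (F4_gen s \<circ> w \<circ> F4_gen t) = F4_len w + 2"
proof -
  have pos: "w (F4_root t) \<in> F4_pos"
    using F4_W_root_pos_or_neg[OF w t] F4_len_comp_gen_neg[OF w t] right by fastforce
  have "w (F4_root t) \<noteq> F4_root s"
    using F4_W_inner[OF w, of "F4_root t" "F4_root t"] norm by auto
  then have "(F4_gen s \<circ> w) (F4_root t) \<in> F4_pos" using F4_gen_pos_root[OF s pos] by simp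
  from F4_len_comp_gen_pos[OF gen_comp_in_F4_W[OF w s] t this] show ?thesis
    unfolding left by linarith
qed

text \<open>Positive roots are nonnegative combinations of the simple roots.\<close>
lemma F4_W_pos_to_neg:
  assumes v: "v \<in> F4_W" and simple: "\<forall>s\<in>{1..4}. v (F4_root s) \<in> F4_neg" and \<alpha>: "\<alpha> \<in> F4_pos"
  shows "v \<alpha> \<in> F4_neg"
proof -
  let ?y1 = "- v (F4_root 1)" and ?y2 = "- v (F4_root 2)" and ?y3 = "- v (F4_root 3)"
    and ?y4 = "- v (F4_root 4)"
  have y: "?y1 \<in> F4_pos" "?y2 \<in> F4_pos" "?y3 \<in> F4_pos" "?y4 \<in> F4_pos"
    using simple F4_neg_iff by auto
  have "v \<alpha> = simple_coord1 \<alpha> *\<^sub>R v (F4_root 1) + simple_coord2 \<alpha> *\<^sub>R v (F4_root 2)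
      + simple_coord3 \<alpha> *\<^sub>R v (F4_root 3) + simple_coord4 \<alpha> *\<^sub>R v (F4_root 4)"
    by (subst simple_coord_expansion[of \<alpha>])
      (simp add: linear_add[OF linear_F4_W[OF v]] linear_scale[OF linear_F4_W[OF v]])
  then have "- v \<alpha> = simple_coord1 \<alpha> *\<^sub>R ?y1 + simple_coord2 \<alpha> *\<^sub>R ?y2
      + simple_coord3 \<alpha> *\<^sub>R ?y3 + simple_coord4 \<alpha> *\<^sub>R ?y4"
    by (simp add: algebra_simps)
  then have nonneg: "simple_coord1 (- v \<alpha>) \<ge> 0" "simple_coord2 (- v \<alpha>) \<ge> 0"
    "simple_coord3 (- v \<alpha>) \<ge> 0" "simple_coord4 (- v \<alpha>) \<ge> 0"
    using F4_pos_simple_coord_nonneg[OF \<alpha>] F4_pos_simple_coord_nonneg[OF y(1)]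
      F4_pos_simple_coord_nonneg[OF y(2)] F4_pos_simple_coord_nonneg[OF y(3)]
      F4_pos_simple_coord_nonneg[OF y(4)]
    by (simp_all only: simple_coord_linear) (simp_all add: add_nonneg_nonneg)
  then have "v \<alpha> \<notin> F4_pos"
  proof (intro notI)
    assume pos: "v \<alpha> \<in> F4_pos"
    with nonneg have "simple_coord1 (v \<alpha>) = 0" "simple_coord2 (v \<alpha>) = 0"
      "simple_coord3 (v \<alpha>) = 0" "simple_coord4 (v \<alpha>) = 0"
      using F4_pos_simple_coord_nonneg[OF pos] by (auto simp: simple_coord_uminus)
    then have "v \<alpha> = 0" using simple_coord_expansion[of "v \<alpha>"] by simp
    with pos zero_notin_F4_pos show False by simp
  qed
  moreover have "v \<alpha> \<in> F4_roots"
    using v \<alpha> F4_word_in_roots unfolding in_F4_W_iff F4_roots_def by blast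
  ultimately show ?thesis unfolding F4_roots_def by blast
qed

lemma F4_len_le_if_left_descents:
  assumes w: "w \<in> F4_W" and descents: "\<forall>s\<in>{1..4}. F4_len (F4_gen s \<circ> w) < F4_len w"
    and u: "u \<in> F4_W"
  shows "F4_len u \<le> F4_len w"
proof -
  have "\<forall>s\<in>{1..4}. inv w (F4_root s) \<in> F4_neg"
    using F4_W_root_pos_or_neg[OF inv_in_F4_W[OF w]] F4_len_gen_comp_pos[OF w] descents by fastforce
  then have "inversions (inv w) = F4_pos"
    using F4_W_pos_to_neg[OF inv_in_F4_W[OF w]] unfolding inversions_def by auto
  then show ?thesis
    using F4_len_le_card_pos[OF u] F4_len_eq_card_inversions[OF inv_in_F4_W[OF w]] F4_len_inv[OF w]
    by simp
qed

section \<open>Buildings of type F4 as W-metric spaces\<close>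

fun typed_gallery :: "'c set \<Rightarrow> ('c \<Rightarrow> 'c \<Rightarrow> (real^4 \<Rightarrow> real^4)) \<Rightarrow> 'c \<Rightarrow> nat list \<Rightarrow> 'c \<Rightarrow> bool" where
  "typed_gallery Ch \<delta> C [] D \<longleftrightarrow> C = D \<and> C \<in> Ch"
| "typed_gallery Ch \<delta> C (s # ws) D \<longleftrightarrow>
     C \<in> Ch \<and> (\<exists>C'\<in>Ch. \<delta> C C' = F4_gen s \<and> typed_gallery Ch \<delta> C' ws D)"

lemma typed_gallery_in: "typed_gallery Ch \<delta> C ws D \<Longrightarrow> C \<in> Ch \<and> D \<in> Ch"
  by (induction ws arbitrary: C) auto

lemma typed_gallery_snoc:
  "typed_gallery Ch \<delta> C ws M \<Longrightarrow> D \<in> Ch \<Longrightarrow> \<delta> M D = F4_gen s \<Longrightarrow> typed_gallery Ch \<delta> C (ws @ [s]) D"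
  by (induction ws arbitrary: C) auto

lemma gallery_Cons:
  "gallery Ch \<delta> (C # g) \<longleftrightarrow> C \<in> Ch \<and> (g = [] \<or> adjacent Ch \<delta> C (hd g) \<and> gallery Ch \<delta> g)"
proof (cases g)
  case (Cons D h)
  have "(\<forall>k. Suc k < length (C # g) \<longrightarrow> adjacent Ch \<delta> ((C # g) ! k) ((C # g) ! Suc k)) \<longleftrightarrow>
    adjacent Ch \<delta> C D \<and> (\<forall>k. Suc k < length g \<longrightarrow> adjacent Ch \<delta> (g ! k) (g ! Suc k))"
    unfolding Cons by (simp add: All_less_Suc2)
  then show ?thesis unfolding gallery_def Cons by auto
qed (simp add: gallery_def)

lemma gallery_of_typed_gallery:
  "typed_gallery Ch \<delta> C ws D \<Longrightarrow> set ws \<subseteq> {1..4} \<Longrightarrow>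
   \<exists>g. gallery Ch \<delta> g \<and> hd g = C \<and> last g = D \<and> length g = Suc (length ws)"
proof (induction ws arbitrary: C)
  case Nil
  then show ?case by (intro exI[of _ "[C]"]) (auto simp: gallery_Cons)
next
  case (Cons s ws)
  obtain C' where C': "C' \<in> Ch" "\<delta> C C' = F4_gen s" "typed_gallery Ch \<delta> C' ws D"
    using Cons.prems(1) by auto
  obtain g where g: "gallery Ch \<delta> g" "hd g = C'" "last g = D" "length g = Suc (length ws)"
    using Cons.IH[OF C'(3)] Cons.prems(2) by auto
  have "adjacent Ch \<delta> C C'" unfolding adjacent_def using Cons.prems C' by auto
  with g have "gallery Ch \<delta> (C # g)" using Cons.prems(1) by (auto simp: gallery_Cons)
  with g show ?case by (intro exI[of _ "C # g"]) auto
qed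

locale building_of_type_F4 =
  fixes Ch :: "'c set" and \<delta> :: "'c \<Rightarrow> 'c \<Rightarrow> (real^4 \<Rightarrow> real^4)"
  assumes building: "F4_building Ch \<delta>"
begin

lemma delta_in_F4_W: "x \<in> Ch \<Longrightarrow> y \<in> Ch \<Longrightarrow> \<delta> x y \<in> F4_W"
  using building unfolding F4_building_def by auto

lemma delta_eq_id_iff: "x \<in> Ch \<Longrightarrow> y \<in> Ch \<Longrightarrow> \<delta> x y = id \<longleftrightarrow> x = y"
  using building unfolding F4_building_def by blast

lemma delta_gen_left_cases:
  "C \<in> Ch \<Longrightarrow> D \<in> Ch \<Longrightarrow> C' \<in> Ch \<Longrightarrow> s \<in> {1..4} \<Longrightarrow> \<delta> C' C = F4_gen s \<Longrightarrow>
   \<delta> C' D = F4_gen s \<circ> \<delta> C D \<or> \<delta> C' D = \<delta> C D"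
  using building unfolding F4_building_def by blast

lemma delta_gen_left_longer:
  "C \<in> Ch \<Longrightarrow> D \<in> Ch \<Longrightarrow> C' \<in> Ch \<Longrightarrow> s \<in> {1..4} \<Longrightarrow> \<delta> C' C = F4_gen s \<Longrightarrow>
   F4_len (F4_gen s \<circ> \<delta> C D) = F4_len (\<delta> C D) + 1 \<Longrightarrow> \<delta> C' D = F4_gen s \<circ> \<delta> C D"
  using building unfolding F4_building_def by blast

lemma exists_gen_left:
  "C \<in> Ch \<Longrightarrow> D \<in> Ch \<Longrightarrow> s \<in> {1..4} \<Longrightarrow>
   \<exists>C'\<in>Ch. \<delta> C' C = F4_gen s \<and> \<delta> C' D = F4_gen s \<circ> \<delta> C D"
  using building unfolding F4_building_def by blast

lemma delta_gen_sym:
  assumes C: "C \<in> Ch" "C' \<in> Ch" and s: "s \<in> {1..4}" and adj: "\<delta> C' C = F4_gen s"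
  shows "\<delta> C C' = F4_gen s"
proof -
  have "C \<noteq> C'"
  proof
    assume "C = C'"
    then have "F4_gen s = id" using adj delta_eq_id_iff[OF C(2) C(2)] by auto
    then show False using F4_gen_ne_id by blast
  qed
  then have "\<delta> C C' \<noteq> id" using delta_eq_id_iff C by simp
  moreover have "\<delta> C' C' = id" using delta_eq_id_iff C by simp
  ultimately have "id = F4_gen s \<circ> \<delta> C C'"
    using delta_gen_left_cases[OF C(1) C(2) C(2) s adj] by auto
  then have "F4_gen s \<circ> id = F4_gen s \<circ> (F4_gen s \<circ> \<delta> C C')" by simp
  then show ?thesis unfolding gen_comp_gen_comp comp_id by simp
qed

lemma delta_common_panel:
  assumes C: "C \<in> Ch" and D: "D1 \<in> Ch" "D2 \<in> Ch" "D1 \<noteq> D2" and s: "s \<in> {1..4}"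
    and adj: "\<delta> C D1 = F4_gen s" "\<delta> C D2 = F4_gen s"
  shows "\<delta> D1 D2 = F4_gen s"
proof -
  have "\<delta> D1 D2 = F4_gen s \<circ> \<delta> C D2 \<or> \<delta> D1 D2 = \<delta> C D2"
    by (rule delta_gen_left_cases[OF C D(2) D(1) s delta_gen_sym[OF D(1) C s adj(1)]])
  moreover have "F4_gen s \<circ> \<delta> C D2 = id" unfolding adj(2) by (rule F4_gen_comp_gen)
  moreover have "\<delta> D1 D2 \<noteq> id" using delta_eq_id_iff D by simp
  ultimately show ?thesis using adj(2) by auto
qed

lemma delta_typed_gallery:
  "typed_gallery Ch \<delta> C ws D \<Longrightarrow> set ws \<subseteq> {1..4} \<Longrightarrow> F4_len (F4_word ws) = length ws \<Longrightarrow>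
   \<delta> C D = F4_word ws"
proof (induction ws arbitrary: C)
  case Nil
  then have "C = D" "D \<in> Ch" by auto
  then show ?case unfolding F4_word_Nil using delta_eq_id_iff by blast
next
  case (Cons s ws)
  have s: "s \<in> {1..4}" and ws: "set ws \<subseteq> {1..4}" using Cons.prems by auto
  obtain C' where C': "C' \<in> Ch" "\<delta> C C' = F4_gen s" "typed_gallery Ch \<delta> C' ws D"
    using Cons.prems(1) by auto
  have C: "C \<in> Ch" and D: "D \<in> Ch" using typed_gallery_in[OF Cons.prems(1)] by auto
  have long: "F4_len (F4_gen s \<circ> F4_word ws) = length ws + 1"
    using Cons.prems(3) by (simp only: F4_word_Cons length_Cons Suc_eq_plus1)
  have "F4_len (F4_gen s \<circ> F4_word ws) \<le> F4_len (F4_word ws) + 1"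
    using F4_len_gen_comp_cases[OF F4_word_in_W[OF ws] s] by auto
  then have reduced: "F4_len (F4_word ws) = length ws"
    using F4_len_le_length[OF ws] long by linarith
  have IH: "\<delta> C' D = F4_word ws" by (rule Cons.IH[OF C'(3) ws reduced])
  have "\<delta> C D = F4_gen s \<circ> \<delta> C' D"
    using delta_gen_left_longer[OF C'(1) D C s C'(2)] long reduced unfolding IH by simp
  then show ?case using IH by simp
qed

lemma typed_gallery_exists:
  "C \<in> Ch \<Longrightarrow> D \<in> Ch \<Longrightarrow>
   \<exists>ws. typed_gallery Ch \<delta> C ws D \<and> set ws \<subseteq> {1..4} \<and> length ws = F4_len (\<delta> C D)
     \<and> F4_word ws = \<delta> C D"
proof (induction "F4_len (\<delta> C D)" arbitrary: C rule: less_induct)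
  case less
  obtain us where us: "set us \<subseteq> {1..4}" "length us = F4_len (\<delta> C D)" "F4_word us = \<delta> C D"
    using F4_reduced_word_exists[OF delta_in_F4_W[OF less.prems]] by blast
  show ?case
  proof (cases us)
    case Nil
    then have "C = D" using us delta_eq_id_iff[OF less.prems] by simp
    then show ?thesis using less.prems Nil us by (intro exI[of _ "[]"]) simp
  next
    case (Cons s us')
    have s: "s \<in> {1..4}" and us': "set us' \<subseteq> {1..4}" using us Cons by auto
    obtain C' where C': "C' \<in> Ch" "\<delta> C' C = F4_gen s" "\<delta> C' D = F4_gen s \<circ> \<delta> C D"
      using exists_gen_left[OF less.prems s] by blast
    have "\<delta> C' D = F4_word us'"
      unfolding C'(3) us(3)[symmetric] Cons F4_word_Cons gen_comp_gen_comp ..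
    then have lt: "F4_len (\<delta> C' D) < F4_len (\<delta> C D)" using F4_len_le_length[OF us'] us(2) Cons by simp
    obtain ws where ws: "typed_gallery Ch \<delta> C' ws D" "set ws \<subseteq> {1..4}"
      "length ws = F4_len (\<delta> C' D)" "F4_word ws = \<delta> C' D"
      using less.hyps[OF lt C'(1) less.prems(2)] by blast
    have "typed_gallery Ch \<delta> C (s # ws) D"
      using ws(1) delta_gen_sym[OF less.prems(1) C'(1) s C'(2)] C'(1) less.prems(1) by auto
    moreover have word: "F4_word (s # ws) = \<delta> C D"
      unfolding F4_word_Cons ws(4) C'(3) gen_comp_gen_comp ..
    moreover have "length (s # ws) = F4_len (\<delta> C D)"
      using F4_len_le_length[of "s # ws"] ws(2,3) s word lt by simp
    ultimately show ?thesis using ws(2) s by (intro exI[of _ "s # ws"]) simp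
  qed
qed

lemma typed_gallery_rev:
  "typed_gallery Ch \<delta> C ws D \<Longrightarrow> set ws \<subseteq> {1..4} \<Longrightarrow> typed_gallery Ch \<delta> D (rev ws) C"
proof (induction ws arbitrary: C)
  case (Cons s ws)
  obtain C' where C': "C' \<in> Ch" "\<delta> C C' = F4_gen s" "typed_gallery Ch \<delta> C' ws D"
    using Cons.prems(1) by auto
  have "typed_gallery Ch \<delta> D (rev ws) C'" using Cons.IH[OF C'(3)] Cons.prems(2) by simp
  moreover have "C \<in> Ch" using Cons.prems(1) by simp
  moreover have "\<delta> C' C = F4_gen s"
    using delta_gen_sym[OF C'(1) _ _ C'(2)] Cons.prems by simp
  ultimately show ?case unfolding rev.simps(2) by (rule typed_gallery_snoc)
qed auto

lemma delta_swap:
  assumes C: "C \<in> Ch" and D: "D \<in> Ch"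
  shows "\<delta> D C = inv (\<delta> C D)"
proof -
  obtain ws where ws: "typed_gallery Ch \<delta> C ws D" "set ws \<subseteq> {1..4}"
    "length ws = F4_len (\<delta> C D)" "F4_word ws = \<delta> C D"
    using typed_gallery_exists[OF C D] by blast
  have rev: "F4_word (rev ws) = inv (\<delta> C D)" unfolding ws(4)[symmetric] inv_F4_word ..
  then have "F4_len (F4_word (rev ws)) = length (rev ws)"
    using F4_len_inv[OF delta_in_F4_W[OF C D]] ws(3) by simp
  then have "\<delta> D C = F4_word (rev ws)"
    using delta_typed_gallery[OF typed_gallery_rev[OF ws(1,2)]] ws(2) by simp
  then show ?thesis using rev by simp
qed

lemma delta_gen_right:
  assumes C: "C \<in> Ch" and D: "D \<in> Ch" "D' \<in> Ch" and t: "t \<in> {1..4}" and adj: "\<delta> D' D = F4_gen t"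
  shows delta_gen_right_cases: "\<delta> C D' = \<delta> C D \<circ> F4_gen t \<or> \<delta> C D' = \<delta> C D"
    and delta_gen_right_longer:
      "F4_len (\<delta> C D \<circ> F4_gen t) = F4_len (\<delta> C D) + 1 \<Longrightarrow> \<delta> C D' = \<delta> C D \<circ> F4_gen t"
proof -
  let ?w = "\<delta> C D"
  have w: "?w \<in> F4_W" by (rule delta_in_F4_W[OF C D(1)])
  have swap: "\<delta> C D' = inv (\<delta> D' C)" "\<delta> D C = inv ?w"
    using delta_swap[OF D(2) C] delta_swap[OF C D(1)] .
  have inv_inv: "inv (F4_gen t \<circ> inv ?w) = ?w \<circ> F4_gen t"
    using inv_gen_comp[OF inv_in_F4_W[OF w]] inv_inv_eq[OF bij_F4_W[OF w]] by simp
  have "\<delta> D' C = F4_gen t \<circ> inv ?w \<or> \<delta> D' C = inv ?w"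
    using delta_gen_left_cases[OF D(1) C D(2) t adj] unfolding swap(2) .
  then have "\<delta> C D' = inv (F4_gen t \<circ> inv ?w) \<or> \<delta> C D' = inv (inv ?w)"
    unfolding swap(1) by (elim disjE) auto
  then show "\<delta> C D' = ?w \<circ> F4_gen t \<or> \<delta> C D' = ?w"
    unfolding inv_inv inv_inv_eq[OF bij_F4_W[OF w]] .
  assume long: "F4_len (?w \<circ> F4_gen t) = F4_len ?w + 1"
  have "F4_len (F4_gen t \<circ> inv ?w) = F4_len (inv (F4_gen t \<circ> inv ?w))"
    by (rule sym[OF F4_len_inv[OF gen_comp_in_F4_W[OF inv_in_F4_W[OF w] t]]])
  also have "\<dots> = F4_len (inv ?w) + 1" unfolding inv_inv long F4_len_inv[OF w] ..
  finally have "F4_len (F4_gen t \<circ> \<delta> D C) = F4_len (\<delta> D C) + 1" unfolding swap(2) .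
  then have "\<delta> D' C = F4_gen t \<circ> \<delta> D C" by (rule delta_gen_left_longer[OF D(1) C D(2) t adj])
  then have "inv (\<delta> D' C) = inv (F4_gen t \<circ> inv ?w)" unfolding swap(2) by (rule arg_cong)
  then show "\<delta> C D' = ?w \<circ> F4_gen t" unfolding swap(1) inv_inv .
qed

lemma F4_len_delta_le_gallery:
  "gallery Ch \<delta> g \<Longrightarrow> F4_len (\<delta> (hd g) (last g)) + 1 \<le> length g"
proof (induction g)
  case (Cons x g)
  have x: "x \<in> Ch" using Cons.prems by (simp add: gallery_Cons)
  show ?case
  proof (cases g)
    case Nil
    have "\<delta> x x = id" using delta_eq_id_iff[OF x x] by blast
    have "F4_len (\<delta> x x) = 0" unfolding \<open>\<delta> x x = id\<close> by (rule F4_len_id)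
    with Nil show ?thesis by simp
  next
    case g: (Cons y rest)
    have gal: "gallery Ch \<delta> g" and "adjacent Ch \<delta> x y"
      using Cons.prems g by (simp_all add: gallery_Cons)
    then obtain i where i: "i \<in> {1..4}" "\<delta> x y = F4_gen i" and y: "y \<in> Ch"
      unfolding adjacent_def by blast
    have D: "last g \<in> Ch" using gal last_in_set unfolding gallery_def by blast
    have "\<delta> x (last g) = F4_gen i \<circ> \<delta> y (last g) \<or> \<delta> x (last g) = \<delta> y (last g)"
      by (rule delta_gen_left_cases[OF y D x i])
    moreover have "F4_len (F4_gen i \<circ> \<delta> y (last g)) \<le> F4_len (\<delta> y (last g)) + 1"
      using F4_len_gen_comp_cases[OF delta_in_F4_W[OF y D] i(1)] by linarith
    ultimately have "F4_len (\<delta> x (last g)) \<le> F4_len (\<delta> y (last g)) + 1" by auto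
    then show ?thesis using Cons.IH[OF gal] g by simp
  qed
qed (simp add: gallery_def)

lemma gdist_eq_F4_len:
  assumes C: "C \<in> Ch" and D: "D \<in> Ch"
  shows "gdist Ch \<delta> C D = F4_len (\<delta> C D)"
  unfolding gdist_def
proof (rule Least_equality)
  obtain ws where "typed_gallery Ch \<delta> C ws D" "set ws \<subseteq> {1..4}" "length ws = F4_len (\<delta> C D)"
    using typed_gallery_exists[OF C D] by blast
  then show "\<exists>g. gallery Ch \<delta> g \<and> hd g = C \<and> last g = D \<and> length g = Suc (F4_len (\<delta> C D))"
    using gallery_of_typed_gallery by fastforce
next
  fix n assume "\<exists>g. gallery Ch \<delta> g \<and> hd g = C \<and> last g = D \<and> length g = Suc n"
  then show "F4_len (\<delta> C D) \<le> n" using F4_len_delta_le_gallery by fastforce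
qed

lemma opposite_if_left_descents:
  assumes C: "C \<in> Ch" and D: "D \<in> Ch"
    and descents: "\<forall>s\<in>{1..4}. F4_len (F4_gen s \<circ> \<delta> C D) < F4_len (\<delta> C D)"
  shows "opposite Ch \<delta> C D"
  unfolding opposite_def
  using C D F4_len_le_if_left_descents[OF delta_in_F4_W[OF C D] descents delta_in_F4_W]
  by (simp add: gdist_eq_F4_len)

end

section \<open>Dualities\<close>

locale F4_duality = building_of_type_F4 +
  fixes \<theta> :: "'c \<Rightarrow> 'c"
  assumes duality: "duality Ch \<delta> \<theta>"
begin

lemma theta_in: "x \<in> Ch \<Longrightarrow> \<theta> x \<in> Ch"
  using duality bij_betwE unfolding duality_def by blast

lemma delta_theta_gen:
  "x \<in> Ch \<Longrightarrow> y \<in> Ch \<Longrightarrow> s \<in> {1..4} \<Longrightarrow> \<delta> x y = F4_gen s \<Longrightarrow> \<delta> (\<theta> x) (\<theta> y) = F4_gen (5 - s)"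
  using duality unfolding duality_def by blast

lemma exists_max_displacement:
  obtains C where "C \<in> Ch" "\<And>C'. C' \<in> Ch \<Longrightarrow> F4_len (\<delta> C' (\<theta> C')) \<le> F4_len (\<delta> C (\<theta> C))"
proof -
  have "Ch \<noteq> {}" using building unfolding F4_building_def by blast
  then obtain C0 where "C0 \<in> Ch" by blast
  moreover have "\<forall>C. C \<in> Ch \<longrightarrow> F4_len (\<delta> C (\<theta> C)) < card F4_pos + 1"
    using F4_len_le_card_pos delta_in_F4_W theta_in by (simp add: less_Suc_eq_le)
  ultimately show ?thesis
    using ex_has_greatest_nat[of "\<lambda>C. C \<in> Ch" C0 "\<lambda>C. F4_len (\<delta> C (\<theta> C))"] that by blast
qed

lemma displacement_grows_by_two:
  assumes C: "C \<in> Ch" and s: "s \<in> {1..4}"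
    and left: "F4_len (F4_gen s \<circ> \<delta> C (\<theta> C)) = F4_len (\<delta> C (\<theta> C)) + 1"
    and right: "F4_len (\<delta> C (\<theta> C) \<circ> F4_gen (5 - s)) = F4_len (\<delta> C (\<theta> C)) + 1"
  obtains C' where "C' \<in> Ch" "F4_len (\<delta> C' (\<theta> C')) = F4_len (\<delta> C (\<theta> C)) + 2"
proof -
  define w t where "w = \<delta> C (\<theta> C)" and "t = 5 - s"
  have t: "t \<in> {1..4}" using s unfolding t_def by auto
  have w: "w \<in> F4_W" unfolding w_def by (rule delta_in_F4_W[OF C theta_in[OF C]])
  obtain C' where C': "C' \<in> Ch" "\<delta> C' C = F4_gen s" using exists_gen_left[OF C C s] by blast
  have C'_thetaC: "\<delta> C' (\<theta> C) = F4_gen s \<circ> w"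
    unfolding w_def by (rule delta_gen_left_longer[OF C theta_in[OF C] C'(1) s C'(2) left])
  have "\<delta> (\<theta> C) (\<theta> C') = F4_gen t"
    unfolding t_def by (rule delta_theta_gen[OF C C'(1) s delta_gen_sym[OF C C'(1) s C'(2)]])
  then have adj: "\<delta> (\<theta> C') (\<theta> C) = F4_gen t"
    by (rule delta_gen_sym[OF theta_in[OF C'(1)] theta_in[OF C] t])
  have long: "F4_len (F4_gen s \<circ> w \<circ> F4_gen t) = F4_len w + 2"
    using F4_len_gen_comp_comp_gen[OF w s t _ left[folded w_def] right[folded w_def t_def]]
      F4_root_norm_dual[OF s] unfolding t_def by blast
  then have "\<delta> C' (\<theta> C') = F4_gen s \<circ> w \<circ> F4_gen t"
    using delta_gen_right_longer[OF C'(1) theta_in[OF C] theta_in[OF C'(1)] t adj] left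
    unfolding C'_thetaC w_def by simp
  with long show ?thesis
    using that[OF C'(1)] unfolding w_def by simp
qed

text \<open>Here maximality forbids \<open>\<delta>(D, \<theta>D) = s w\<close>, and the two remaining positions of \<open>\<theta>D\<close>
  are then pinned down by \<open>C\<close> and \<open>D\<close> simultaneously.\<close>
lemma delta_theta_of_adjacent:
  assumes C: "C \<in> Ch" and s: "s \<in> {1..4}"
    and max: "\<And>C'. C' \<in> Ch \<Longrightarrow> F4_len (\<delta> C' (\<theta> C')) \<le> F4_len (\<delta> C (\<theta> C))"
    and left: "F4_len (F4_gen s \<circ> \<delta> C (\<theta> C)) = F4_len (\<delta> C (\<theta> C)) + 1"
    and right: "F4_len (\<delta> C (\<theta> C) \<circ> F4_gen (5 - s)) + 1 = F4_len (\<delta> C (\<theta> C))"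
    and D: "D \<in> Ch" "\<delta> C D = F4_gen s"
  shows "\<delta> C (\<theta> D) = \<delta> C (\<theta> C) \<circ> F4_gen (5 - s)"
proof -
  define w t where "w = \<delta> C (\<theta> C)" and "t = 5 - s"
  have t: "t \<in> {1..4}" using s unfolding t_def by auto
  have D_thetaC: "\<delta> D (\<theta> C) = F4_gen s \<circ> w"
    unfolding w_def by (rule delta_gen_left_longer[OF C theta_in[OF C] D(1) s delta_gen_sym[OF D(1) C s D(2)] left])
  have "\<delta> (\<theta> C) (\<theta> D) = F4_gen t" unfolding t_def by (rule delta_theta_gen[OF C D(1) s D(2)])
  then have adj: "\<delta> (\<theta> D) (\<theta> C) = F4_gen t"
    by (rule delta_gen_sym[OF theta_in[OF D(1)] theta_in[OF C] t])
  have "\<delta> D (\<theta> D) \<noteq> F4_gen s \<circ> w"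
    using max[OF D(1)] left unfolding w_def by auto
  then have D_thetaD: "\<delta> D (\<theta> D) = F4_gen s \<circ> w \<circ> F4_gen t"
    using delta_gen_right_cases[OF D(1) theta_in[OF C] theta_in[OF D(1)] t adj] unfolding D_thetaC by blast
  have "\<delta> C (\<theta> D) = w \<circ> F4_gen t \<or> \<delta> C (\<theta> D) = w"
    using delta_gen_right_cases[OF C theta_in[OF C] theta_in[OF D(1)] t adj] unfolding w_def .
  moreover have "\<delta> C (\<theta> D) = w \<circ> F4_gen t \<or> \<delta> C (\<theta> D) = F4_gen s \<circ> w \<circ> F4_gen t"
    using delta_gen_left_cases[OF D(1) theta_in[OF D(1)] C s D(2)]
    unfolding D_thetaD comp_assoc gen_comp_gen_comp .
  moreover have "w \<noteq> F4_gen s \<circ> w \<circ> F4_gen t"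
  proof
    assume "w = F4_gen s \<circ> w \<circ> F4_gen t"
    then have "w \<circ> F4_gen t = F4_gen s \<circ> w" by (metis comp_gen_gen)
    then show False using left right unfolding w_def t_def by simp
  qed
  ultimately show ?thesis unfolding w_def t_def by metis
qed

lemma left_descent_of_max_displacement:
  assumes thick: "thick Ch \<delta>" and C: "C \<in> Ch" and s: "s \<in> {1..4}"
    and max: "\<And>C'. C' \<in> Ch \<Longrightarrow> F4_len (\<delta> C' (\<theta> C')) \<le> F4_len (\<delta> C (\<theta> C))"
  shows "F4_len (F4_gen s \<circ> \<delta> C (\<theta> C)) < F4_len (\<delta> C (\<theta> C))"
proof (rule ccontr)
  define w t where "w = \<delta> C (\<theta> C)" and "t = 5 - s"
  have t: "t \<in> {1..4}" using s unfolding t_def by auto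
  have w: "w \<in> F4_W" unfolding w_def by (rule delta_in_F4_W[OF C theta_in[OF C]])
  assume "\<not> F4_len (F4_gen s \<circ> \<delta> C (\<theta> C)) < F4_len (\<delta> C (\<theta> C))"
  then have left: "F4_len (F4_gen s \<circ> \<delta> C (\<theta> C)) = F4_len (\<delta> C (\<theta> C)) + 1"
    using F4_len_gen_comp_cases[OF w s] unfolding w_def by auto
  consider (up) "F4_len (w \<circ> F4_gen t) = F4_len w + 1" | (down) "F4_len (w \<circ> F4_gen t) + 1 = F4_len w"
    using F4_len_comp_gen_cases[OF w t] by blast
  then show False
  proof cases
    case up
    then obtain C' where "C' \<in> Ch" "F4_len (\<delta> C' (\<theta> C')) = F4_len w + 2"
      using displacement_grows_by_two[OF C s left] unfolding w_def t_def by blast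
    with max show False unfolding w_def by fastforce
  next
    case down
    obtain D1 D2 where D: "D1 \<in> Ch" "D2 \<in> Ch" "D1 \<noteq> D2" "\<delta> C D1 = F4_gen s" "\<delta> C D2 = F4_gen s"
      using thick C s unfolding thick_def by blast
    have theta_D: "\<delta> C (\<theta> D1) = w \<circ> F4_gen t" "\<delta> C (\<theta> D2) = w \<circ> F4_gen t"
      using delta_theta_of_adjacent[OF C s max left down[unfolded w_def t_def]] D unfolding w_def t_def
      by auto
    text \<open>By thickness, \<open>\<theta>D\<^sub>1\<close> and \<open>\<theta>D\<^sub>2\<close> are distinct chambers of one \<open>t\<close>-panel, both at
      Weyl distance \<open>w t\<close> from \<open>C\<close>; since \<open>w t t\<close> is longer than \<open>w t\<close> this is impossible.\<close>
    have "\<delta> (\<theta> D1) (\<theta> D2) = F4_gen t"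
      unfolding t_def by (rule delta_theta_gen[OF D(1,2) s delta_common_panel[OF C D(1,2,3) s D(4,5)]])
    then have adj: "\<delta> (\<theta> D2) (\<theta> D1) = F4_gen t"
      by (rule delta_gen_sym[OF theta_in[OF D(2)] theta_in[OF D(1)] t])
    have "F4_len (\<delta> C (\<theta> D1) \<circ> F4_gen t) = F4_len (\<delta> C (\<theta> D1)) + 1"
      unfolding theta_D comp_gen_gen using down by simp
    then have "\<delta> C (\<theta> D2) = \<delta> C (\<theta> D1) \<circ> F4_gen t"
      by (rule delta_gen_right_longer[OF C theta_in[OF D(1)] theta_in[OF D(2)] t adj])
    then have "w \<circ> F4_gen t = w" unfolding theta_D comp_gen_gen .
    with down show False by simp
  qed
qed

end

theorem lemma4p1:
  fixes Ch :: "'c set" and \<delta> :: "'c \<Rightarrow> 'c \<Rightarrow> (real^4 \<Rightarrow> real^4)" and \<theta> :: "'c \<Rightarrow> 'c"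
  assumes "F4_building Ch \<delta>" and "thick Ch \<delta>" and "duality Ch \<delta> \<theta>"
  shows "\<not> domestic Ch \<delta> \<theta>"
proof
  assume domestic: "domestic Ch \<delta> \<theta>"
  interpret F4_duality Ch \<delta> \<theta>
    using assms(1,3) by unfold_locales
  obtain C where C: "C \<in> Ch"
    and max: "\<And>C'. C' \<in> Ch \<Longrightarrow> F4_len (\<delta> C' (\<theta> C')) \<le> F4_len (\<delta> C (\<theta> C))"
    using exists_max_displacement by blast
  have "opposite Ch \<delta> C (\<theta> C)"
    using opposite_if_left_descents[OF C theta_in[OF C]] left_descent_of_max_displacement[OF assms(2) C _ max]
    by blast
  with domestic C show False unfolding domestic_def by blast
qed

end
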